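(* Let $G=(X,b,m,c)$ be a weighted graph with $c=0$ on $X$, and let $p\in(1,\infty)$. Assume that $G$ is $p$-parabolic and let $K\subseteq X$ be a finite non-empty set. Then there exists a function $\kappa\colon X\to[0,\infty)$ such that (a) $\kappa\in D^p$; (b) $\kappa$ is $p$-superharmonic on $X\setminus K$ (i.e. $\kappa\in F^p(X\setminus K)$ and $\Delta_p\kappa\ge 0$ on $X\setminus K$) and $\kappa=0$ on $K$; (c) $\kappa(x)\to\infty$ as $x\to\infty$, i.e. for every $M>0$ there is a finite set $F\subseteq X$ with $\kappa>M$ on $X\setminus F$.
   Context: A weighted graph $G=(X,b,m,c)$ consists of a countably infinite set $X$, a symmetric function $b\colon X\times X\to[0,\infty)$ with $b(x,x)=0$ and $\sum_{y\in X}b(x,y)<\infty$ for all $x$, a function $m\colon X\to(0,\infty)$ and a potential $c\colon X\to[0,\infty)$. Write $x\sim y$ if $b(x,y)>0$; $X$ is assumed connected (any two vertices are joined by a finite path $x=x_0\sim x_1\sim\dots\sim x_n=y$). For $p\in[1,\infty)$ and $f\colon X\to\mathbb{R}$, $\mathcal{E}_p(f)=\frac12\sum_{x,y\in X}b(x,y)|f(x)-f(y)|^p+\sum_{x\in X}c(x)|f(x)|^p$, and $D^p=\{f:\mathcal{E}_p(f)<\infty\}$. $C_c(X)$ denotes finitely supported functions. For finite $K\subseteq X$, $\mathrm{cap}_p(K)=\inf\{\mathcal{E}_p(\varphi):\varphi\in C_c(X),\ \varphi\ge1 \text{ on } K\}$; the graph is $p$-parabolic if $\mathrm{cap}_p(K)=0$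 for every finite $K$, and $p$-hyperbolic otherwise. For $a\in\mathbb{R}$ put $a^{\langle p-1\rangle}=|a|^{p-2}a$ (and $0^{\langle p-1\rangle}=0$). For $V\subseteq X$, $F^p(V)=\{f\colon X\to\mathbb{R}:\sum_{y}b(x,y)|f(x)-f(y)|^{p-1}<\infty\ \forall x\in V\}$, and for $f\in F^p(V)$, $x\in V$: $\Delta_pf(x)=\frac1{m(x)}\sum_{y\in X}b(x,y)(f(x)-f(y))^{\langle p-1\rangle}$. *)

theory Defs
  imports "HOL-Analysis.Analysis"
begin

text \<open>Weighted graph (X,b,m,c) with vertex set the whole type 'a.\<close>
definition weighted_graph ::
  "('a \<Rightarrow> 'a \<Rightarrow> real) \<Rightarrow> ('a \<Rightarrow> real) \<Rightarrow> ('a \<Rightarrow> real) \<Rightarrow> bool" where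
  "weighted_graph b m c \<longleftrightarrow>
     countable (UNIV :: 'a set) \<and> infinite (UNIV :: 'a set) \<and>
     (\<forall>x y. b x y \<ge> 0) \<and> (\<forall>x y. b x y = b y x) \<and> (\<forall>x. b x x = 0) \<and>
     (\<forall>x. (\<lambda>y. b x y) summable_on UNIV) \<and>
     (\<forall>x. m x > 0) \<and> (\<forall>x. c x \<ge> 0) \<and>
     (\<forall>x y. (x, y) \<in> {(u, v). b u v > 0}\<^sup>*)"

definition energy_summands ::
  "('a \<Rightarrow> 'a \<Rightarrow> real) \<Rightarrow> real \<Rightarrow> ('a \<Rightarrow> real) \<Rightarrow> 'a \<times> 'a \<Rightarrow> real" where
  "energy_summands b p f = (\<lambda>(x, y). b x y * \<bar>f x - f y\<bar> powr p)"

definition in_Dp ::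
  "('a \<Rightarrow> 'a \<Rightarrow> real) \<Rightarrow> ('a \<Rightarrow> real) \<Rightarrow> real \<Rightarrow> ('a \<Rightarrow> real) \<Rightarrow> bool" where
  "in_Dp b c p f \<longleftrightarrow> energy_summands b p f summable_on UNIV \<and>
     (\<lambda>x. c x * \<bar>f x\<bar> powr p) summable_on UNIV"

definition energy ::
  "('a \<Rightarrow> 'a \<Rightarrow> real) \<Rightarrow> ('a \<Rightarrow> real) \<Rightarrow> real \<Rightarrow> ('a \<Rightarrow> real) \<Rightarrow> real" where
  "energy b c p f = (1/2) * infsum (energy_summands b p f) UNIV +
     infsum (\<lambda>x. c x * \<bar>f x\<bar> powr p) UNIV"

definition capacity ::
  "('a \<Rightarrow> 'a \<Rightarrow> real) \<Rightarrow> ('a \<Rightarrow> real) \<Rightarrow> real \<Rightarrow> 'a set \<Rightarrow> real" where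
  "capacity b c p K = Inf {energy b c p \<phi> | \<phi>. finite {x. \<phi> x \<noteq> 0} \<and> (\<forall>x\<in>K. \<phi> x \<ge> 1)}"

definition p_parabolic ::
  "('a \<Rightarrow> 'a \<Rightarrow> real) \<Rightarrow> ('a \<Rightarrow> real) \<Rightarrow> real \<Rightarrow> bool" where
  "p_parabolic b c p \<longleftrightarrow> (\<forall>K. finite K \<longrightarrow> capacity b c p K = 0)"

definition spow :: "real \<Rightarrow> real \<Rightarrow> real" where
  "spow p a = (if a = 0 then 0 else \<bar>a\<bar> powr (p - 2) * a)"

definition in_Fp ::
  "('a \<Rightarrow> 'a \<Rightarrow> real) \<Rightarrow> real \<Rightarrow> 'a set \<Rightarrow> ('a \<Rightarrow> real) \<Rightarrow> bool" where
  "in_Fp b p V f \<longleftrightarrow> (\<forall>x\<in>V. (\<lambda>y. b x y * \<bar>f x - f y\<bar> powr (p - 1)) summable_on UNIV)"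

definition p_laplacian ::
  "('a \<Rightarrow> 'a \<Rightarrow> real) \<Rightarrow> ('a \<Rightarrow> real) \<Rightarrow> real \<Rightarrow> ('a \<Rightarrow> real) \<Rightarrow> 'a \<Rightarrow> real" where
  "p_laplacian b m p f x = (1 / m x) * infsum (\<lambda>y. b x y * spow p (f x - f y)) UNIV"

definition p_superharmonic_on ::
  "('a \<Rightarrow> 'a \<Rightarrow> real) \<Rightarrow> ('a \<Rightarrow> real) \<Rightarrow> real \<Rightarrow> 'a set \<Rightarrow> ('a \<Rightarrow> real) \<Rightarrow> bool" where
  "p_superharmonic_on b m p V f \<longleftrightarrow> in_Fp b p V f \<and> (\<forall>x\<in>V. p_laplacian b m p f x \<ge> 0)"

end

(*
  The function kappa solves an obstacle problem.  Parabolicity yields, for every finite S and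
  eps > 0, a cutoff v with 0 <= v <= 1, v = 0 on S, v = 1 outside a finite set and energy at
  most eps.  Along an exhaustion K = F 0, F 1, ... of the vertex set by finite sets, with cutoffs
  v n vanishing on F n, equal to 1 off F (n + 1) and of energy 2^-n / (n + 1)^p, the obstacle
  psi = sup_n (n + 1) v n vanishes on K, tends to infinity and still has finite energy, because
  the energy of a pointwise maximum is at most the sum of the energies.

  An energy minimiser kappa among the functions f >= psi with f = 0 on K exists: along a
  minimising sequence, b(x,y) |f x - f y|^p <= energy bounds the values pointwise by
  connectedness, a diagonal subsequence converges pointwise, and the energy is lower
  semicontinuous.  Raising kappa at a vertex x outside K keeps it admissible, and the
  one-sided derivative of the energy in that direction is 2 p sum_y b(x,y) (kappa x - kappa y)^<p-1>;
  hence this sum, i.e. the p-Laplacian at x, is nonnegative.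
*)

theory Submission
  imports Defs "HOL-Library.Diagonal_Subsequence"
begin

lemma spow_eq_sgn_powr: "spow p a = sgn a * \<bar>a\<bar> powr (p - 1)"
  by (cases a "0::real" rule: linorder_cases) (auto simp: spow_def powr_diff power2_eq_square)

lemma abs_spow: "\<bar>spow p a\<bar> = \<bar>a\<bar> powr (p - 1)"
  by (simp add: spow_eq_sgn_powr abs_mult abs_sgn_eq)

lemma isCont_spow:
  assumes "p > 1"
  shows "isCont (spow p) a"
proof (cases "a = 0")
  case True
  have "((\<lambda>x. \<bar>x\<bar> powr (p - 1)) \<longlongrightarrow> 0) (at 0)"
    by (rule tendsto_zero_powrI[where b = "p - 1"])
      (use assms tendsto_rabs_zero[OF tendsto_ident_at[of 0 UNIV]] in auto)
  then have "((\<lambda>x. \<bar>spow p x\<bar>) \<longlongrightarrow> 0) (at 0)"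
    by (simp only: abs_spow)
  then have "(spow p \<longlongrightarrow> 0) (at 0)"
    by (rule tendsto_rabs_zero_cancel)
  moreover have "spow p 0 = 0"
    by (simp add: spow_def)
  ultimately show ?thesis
    using True by (simp add: isCont_def)
next
  case False
  then show ?thesis
    unfolding spow_eq_sgn_powr[abs_def] by (intro continuous_intros) auto
qed

lemma abs_powr_ge_tangent:
  assumes p: "p > 1"
  shows "\<bar>a\<bar> powr p + p * spow p a * (s - a) \<le> \<bar>s\<bar> powr p"
proof (cases "a = 0")
  case False
  define q where "q = p / (p - 1)"
  have q: "q > 1" "1 / p + 1 / q = 1"
    using p by (auto simp: q_def field_simps)
  have young: "\<bar>s\<bar> * \<bar>a\<bar> powr (p - 1) \<le> \<bar>s\<bar> powr p / p + (\<bar>a\<bar> powr (p - 1)) powr q / q"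
    by (rule Youngs_inequality) (use p q in auto)
  have "(\<bar>a\<bar> powr (p - 1)) powr q = \<bar>a\<bar> powr p"
    using p by (simp add: powr_powr q_def)
  with young p have "p * (\<bar>s\<bar> * \<bar>a\<bar> powr (p - 1)) \<le> \<bar>s\<bar> powr p + (p - 1) * \<bar>a\<bar> powr p"
    by (simp add: q_def field_simps)
  moreover have "sgn a * s \<le> \<bar>s\<bar>"
    using False by (cases "a > 0") auto
  then have "p * (sgn a * s * \<bar>a\<bar> powr (p - 1)) \<le> p * (\<bar>s\<bar> * \<bar>a\<bar> powr (p - 1))"
    using p by (intro mult_left_mono mult_right_mono) auto
  moreover have "sgn a * a * \<bar>a\<bar> powr (p - 1) = \<bar>a\<bar> powr p"
  proof -
    have "sgn a * a = \<bar>a\<bar>"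
      by (cases a "0::real" rule: linorder_cases) auto
    then show ?thesis
      using False by (simp add: powr_diff)
  qed
  ultimately show ?thesis
    by (simp add: spow_eq_sgn_powr algebra_simps)
qed (use p in \<open>simp add: spow_def\<close>)

lemma abs_add_powr_le:
  fixes s t e p :: real
  assumes "\<bar>t\<bar> \<le> 1" "0 \<le> e" "e \<le> p"
  shows "\<bar>s + t\<bar> powr e \<le> 2 powr p * (1 + \<bar>s\<bar> powr p)"
proof -
  define M where "M = max 1 \<bar>s\<bar>"
  have "M \<ge> 1" "\<bar>s + t\<bar> \<le> 2 * M"
    using assms(1) by (auto simp: M_def)
  then have "\<bar>s + t\<bar> powr e \<le> (2 * M) powr e"
    using assms(2) by (simp add: powr_mono2)
  also have "\<dots> \<le> (2 * M) powr p"
    using \<open>M \<ge> 1\<close> assms(3) by (intro powr_mono) auto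
  also have "\<dots> = 2 powr p * M powr p"
    using \<open>M \<ge> 1\<close> by (simp add: powr_mult)
  also have "\<dots> \<le> 2 powr p * (1 + \<bar>s\<bar> powr p)"
    by (intro mult_left_mono) (auto simp: M_def max_def)
  finally show ?thesis .
qed

lemma summable_on_diff:
  fixes f g :: "'a \<Rightarrow> 'b::topological_ab_group_add"
  assumes "f summable_on A" "g summable_on A"
  shows "(\<lambda>x. f x - g x) summable_on A"
  using summable_on_add[OF assms(1) summable_on_uminus[THEN iffD2, OF assms(2)]] by simp

lemma infsum_diff:
  fixes f g :: "'a \<Rightarrow> 'b::{topological_ab_group_add, t2_space}"
  assumes "f summable_on A" "g summable_on A"
  shows "infsum (\<lambda>x. f x - g x) A = infsum f A - infsum g A"
  using infsum_add[OF assms(1) summable_on_uminus[THEN iffD2, OF assms(2)]]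
  by (simp add: infsum_uminus)

lemma summable_on_dominated:
  fixes f g :: "'a \<Rightarrow> real"
  assumes "g summable_on A" "\<And>x. x \<in> A \<Longrightarrow> \<bar>f x\<bar> \<le> g x"
  shows "f summable_on A"
proof -
  have "(\<lambda>x. norm (f x)) summable_on A"
    by (rule Infinite_Sum.abs_summable_on_comparison_test'[OF assms(1)]) (use assms(2) in auto)
  then show ?thesis
    by (rule summable_on_iff_abs_summable_on_real[THEN iffD2])
qed

lemma has_sum_row_iff:
  fixes \<phi> :: "'b \<Rightarrow> 'c::topological_comm_monoid_add"
  shows "((\<lambda>(u, v). if u = x then \<phi> v else 0) has_sum s) UNIV \<longleftrightarrow> (\<phi> has_sum s) UNIV"
proof -
  have "((\<lambda>(u, v). if u = x then \<phi> v else 0) has_sum s) UNIV \<longleftrightarrow>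
        ((\<lambda>(u, v). if u = x then \<phi> v else 0) has_sum s) (Pair x ` UNIV)"
    by (rule has_sum_cong_neutral) auto
  also have "\<dots> \<longleftrightarrow> (\<phi> has_sum s) UNIV"
    by (subst has_sum_reindex) (auto simp: inj_on_def o_def)
  finally show ?thesis .
qed

lemma has_sum_col_iff:
  fixes \<phi> :: "'b \<Rightarrow> 'c::topological_comm_monoid_add"
  shows "((\<lambda>(u, v). if v = x then \<phi> u else 0) has_sum s) UNIV \<longleftrightarrow> (\<phi> has_sum s) UNIV"
proof -
  have "((\<lambda>(u, v). if v = x then \<phi> u else 0) has_sum s) UNIV \<longleftrightarrow>
        ((\<lambda>(u, v). if v = x then \<phi> u else 0) has_sum s) ((\<lambda>u. (u, x)) ` UNIV)"
    by (rule has_sum_cong_neutral) auto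
  also have "\<dots> \<longleftrightarrow> (\<phi> has_sum s) UNIV"
    by (subst has_sum_reindex) (auto simp: inj_on_def o_def)
  finally show ?thesis .
qed

lemma infsum_tail_small:
  fixes g :: "'a \<Rightarrow> real"
  assumes "g summable_on A" "e > 0"
  shows "\<exists>X. finite X \<and> X \<subseteq> A \<and> \<bar>infsum g (A - X)\<bar> < e"
proof -
  have "(sum g \<longlongrightarrow> infsum g A) (finite_subsets_at_top A)"
    using has_sum_infsum[OF assms(1)] unfolding has_sum_def .
  then have "\<forall>\<^sub>F X in finite_subsets_at_top A. dist (sum g X) (infsum g A) < e"
    using assms(2) by (rule tendstoD)
  then obtain X where X: "finite X" "X \<subseteq> A" "dist (sum g X) (infsum g A) < e"
    unfolding eventually_finite_subsets_at_top by blast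
  have "infsum g A = infsum g X + infsum g (A - X)"
    using infsum_Un_disjoint[of g X "A - X"] summable_on_subset_banach[OF assms(1), of "A - X"] X
    by (simp add: Un_absorb1)
  with X show ?thesis
    by (intro exI[of _ X]) (simp add: dist_real_def)
qed

lemma infsum_tendsto_dominated:
  fixes f :: "'c \<Rightarrow> 'b \<Rightarrow> real"
  assumes g: "g summable_on A"
    and dom: "\<forall>\<^sub>F t in F. \<forall>y\<in>A. \<bar>f t y\<bar> \<le> g y"
    and lim: "\<And>y. y \<in> A \<Longrightarrow> ((\<lambda>t. f t y) \<longlongrightarrow> l y) F"
    and F: "F \<noteq> bot"
  shows "((\<lambda>t. infsum (f t) A) \<longlongrightarrow> infsum l A) F"
proof (rule tendstoI)
  fix e :: real
  assume "e > 0"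
  have l_le: "\<bar>l y\<bar> \<le> g y" if "y \<in> A" for y
  proof (rule tendsto_upperbound[OF tendsto_rabs[OF lim[OF that]] _ F])
    show "\<forall>\<^sub>F t in F. \<bar>f t y\<bar> \<le> g y"
      using dom by eventually_elim (use that in auto)
  qed
  have ls: "l summable_on A"
    using g l_le by (rule summable_on_dominated)
  obtain X where X: "finite X" "X \<subseteq> A" "\<bar>infsum g (A - X)\<bar> < e / 4"
    using infsum_tail_small[OF g, of "e / 4"] \<open>e > 0\<close> by auto
  have "((\<lambda>t. \<Sum>y\<in>X. \<bar>f t y - l y\<bar>) \<longlongrightarrow> (\<Sum>y\<in>X. \<bar>l y - l y\<bar>)) F"
    using X by (intro tendsto_intros lim) auto
  then have "\<forall>\<^sub>F t in F. (\<Sum>y\<in>X. \<bar>f t y - l y\<bar>) < e / 2"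
    using \<open>e > 0\<close> by (auto dest: order_tendstoD(2)[where a = "e / 2"])
  with dom show "\<forall>\<^sub>F t in F. dist (infsum (f t) A) (infsum l A) < e"
  proof eventually_elim
    case (elim t)
    have ft: "f t summable_on A"
      using summable_on_dominated[OF g] elim(1) by blast
    have ds: "(\<lambda>y. f t y - l y) summable_on A"
      using ft ls by (rule summable_on_diff)
    have tail: "\<bar>infsum (\<lambda>y. f t y - l y) (A - X)\<bar> \<le> infsum (\<lambda>y. 2 * g y) (A - X)"
      using norm_infsum_le[OF has_sum_infsum has_sum_infsum, of "\<lambda>y. f t y - l y" "A - X" "\<lambda>y. 2 * g y"]
        summable_on_subset_banach[OF ds, of "A - X"] summable_on_cmult_right[OF summable_on_subset_banach[OF g, of "A - X"]]
        elim(1) l_le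
      by (force intro: order.trans[OF abs_triangle_ineq4])
    have "infsum (\<lambda>y. f t y - l y) A = (\<Sum>y\<in>X. f t y - l y) + infsum (\<lambda>y. f t y - l y) (A - X)"
      using infsum_Un_disjoint[of _ X "A - X"] summable_on_subset_banach[OF ds, of "A - X"] X
      by (simp add: Un_absorb1)
    moreover have "\<bar>\<Sum>y\<in>X. f t y - l y\<bar> \<le> (\<Sum>y\<in>X. \<bar>f t y - l y\<bar>)"
      by (rule sum_abs)
    moreover have "infsum (\<lambda>y. 2 * g y) (A - X) < e / 2"
      using X(3) by (simp add: infsum_cmult_right')
    ultimately have "\<bar>infsum (\<lambda>y. f t y - l y) A\<bar> < e"
      using elim(2) tail by linarith
    then show ?case
      using infsum_diff[OF ft ls] by (simp add: dist_real_def)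
  qed
qed

lemma SUP_eq_Max_if_vanishing:
  fixes w :: "nat \<Rightarrow> 'a \<Rightarrow> real"
  assumes F: "incseq F" and w0: "\<And>n x. x \<in> F n \<Longrightarrow> w n x = 0" and x: "x \<in> F j"
  shows "(SUP n. w n x) = Max ((\<lambda>n. w n x) ` {..j})"
proof -
  have "w n x \<in> (\<lambda>n. w n x) ` {..j}" for n
  proof (cases "n \<le> j")
    case False
    then have "x \<in> F n"
      using incseqD[OF F, of j n] x by auto
    then show ?thesis
      using w0 x by (intro image_eqI[of _ _ j]) auto
  qed simp
  then have "range (\<lambda>n. w n x) = (\<lambda>n. w n x) ` {..j}"
    by auto
  then show ?thesis
    by (simp add: cSup_eq_Max)
qed

lemma abs_Max_diff_le:
  fixes f g :: "'b \<Rightarrow> real"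
  assumes "finite N" "N \<noteq> {}"
  shows "\<exists>n\<in>N. \<bar>Max (f ` N) - Max (g ` N)\<bar> \<le> \<bar>f n - g n\<bar>"
proof (cases "Max (g ` N) \<le> Max (f ` N)")
  case True
  have "Max (f ` N) \<in> f ` N"
    using assms by simp
  then obtain n where "n \<in> N" "Max (f ` N) = f n"
    by blast
  moreover have "g n \<le> Max (g ` N)"
    using assms \<open>n \<in> N\<close> by auto
  ultimately show ?thesis
    using True by (intro bexI[of _ n]) auto
next
  case False
  have "Max (g ` N) \<in> g ` N"
    using assms by simp
  then obtain n where "n \<in> N" "Max (g ` N) = g n"
    by blast
  moreover have "f n \<le> Max (f ` N)"
    using assms \<open>n \<in> N\<close> by auto
  ultimately show ?thesis
    using False by (intro bexI[of _ n]) auto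
qed

lemma finite_subset_incseq:
  assumes "finite A" "incseq F" "\<And>x. \<exists>n. x \<in> F n"
  shows "\<exists>j. A \<subseteq> F j"
  using assms(1)
proof (induction rule: finite_induct)
  case (insert x A)
  obtain j k where "A \<subseteq> F j" "x \<in> F k"
    using insert.IH assms(3) by blast
  then show ?case
    using incseqD[OF assms(2), of j "max j k"] incseqD[OF assms(2), of k "max j k"]
    by (intro exI[of _ "max j k"]) auto
qed simp

lemma convergent_subseq_pointwise:
  fixes f :: "nat \<Rightarrow> 'a \<Rightarrow> real"
  assumes cnt: "countable (UNIV :: 'a set)" and bnd: "\<And>x. bounded (range (\<lambda>n. f n x))"
  obtains r where "strict_mono r" "\<And>x. convergent (\<lambda>i. f (r i) x)"
proof -
  define e where "e = from_nat_into (UNIV :: 'a set)"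
  interpret subseqs "\<lambda>n r. convergent (\<lambda>i. f (r i) (e n))"
  proof
    fix n and s :: "nat \<Rightarrow> nat"
    assume "strict_mono s"
    have "bounded (range (\<lambda>i. f (s i) (e n)))"
      using bnd[of "e n"] by (rule bounded_subset) auto
    then obtain r l where "strict_mono r" "((\<lambda>i. f (s i) (e n)) \<circ> r) \<longlonglongrightarrow> l"
      using bounded_imp_convergent_subsequence by blast
    then show "\<exists>r. strict_mono r \<and> convergent (\<lambda>i. f ((s \<circ> r) i) (e n))"
      by (auto simp: convergent_def o_def)
  qed
  have "convergent (\<lambda>i. f (diagseq i) x)" for x
  proof -
    obtain n where n: "e n = x"
      using from_nat_into_surj[OF cnt] unfolding e_def by blast
    have "convergent (\<lambda>i. f ((diagseq \<circ> (+) (Suc n)) i) (e n))"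
    proof (rule diagseq_holds)
      fix r s :: "nat \<Rightarrow> nat" and k
      assume "strict_mono r" "convergent (\<lambda>i. f (s i) (e k))"
      then show "convergent (\<lambda>i. f ((s \<circ> r) i) (e k))"
        using LIMSEQ_subseq_LIMSEQ by (auto simp: convergent_def o_def)
    qed
    then obtain L where "(\<lambda>i. f (diagseq (i + Suc n)) x) \<longlonglongrightarrow> L"
      by (auto simp: n o_def add.commute convergent_def)
    then show ?thesis
      using LIMSEQ_offset[of "\<lambda>i. f (diagseq i) x" "Suc n"] by (auto simp: convergent_def)
  qed
  then show ?thesis
    using that subseq_diagseq by blast
qed

locale edge_weights =
  fixes b :: "'a \<Rightarrow> 'a \<Rightarrow> real" and p :: real
  assumes b_nonneg: "\<And>x y. 0 \<le> b x y"
    and b_sym: "\<And>x y. b x y = b y x"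
    and b_diag: "\<And>x. b x x = 0"
    and b_summable: "\<And>x. b x summable_on UNIV"
    and p_gt_1: "p > 1"
begin

abbreviation finite_energy :: "('a \<Rightarrow> real) \<Rightarrow> bool" where
  "finite_energy f \<equiv> energy_summands b p f summable_on UNIV"

(* E f sums over ordered pairs, so it is twice energy b (\<lambda>_. 0) p f. *)
abbreviation E :: "('a \<Rightarrow> real) \<Rightarrow> real" where
  "E f \<equiv> infsum (energy_summands b p f) UNIV"

lemma energy_summands_nonneg: "0 \<le> energy_summands b p f z"
  by (cases z) (simp add: energy_summands_def b_nonneg)

lemma energy_summands_cong:
  "f u = g u \<Longrightarrow> f v = g v \<Longrightarrow> energy_summands b p f (u, v) = energy_summands b p g (u, v)"
  by (simp add: energy_summands_def)

lemma energy_summands_scale: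
  "energy_summands b p (\<lambda>x. c * f x) z = \<bar>c\<bar> powr p * energy_summands b p f z"
  by (cases z) (simp add: energy_summands_def powr_mult abs_mult flip: right_diff_distrib)

lemma energy_summands_swap: "energy_summands b p f (v, u) = energy_summands b p f (u, v)"
  by (simp add: energy_summands_def b_sym abs_minus_commute)

lemma finite_energy_if_finite_support:
  assumes fin: "finite {x. f x \<noteq> 0}"
  shows "finite_energy f"
proof -
  define S where "S = {x. f x \<noteq> 0}"
  define B where "B = (\<Sum>x\<in>S. \<bar>f x\<bar>)"
  have bound: "\<bar>f x\<bar> \<le> B" for x
    using fin by (cases "x \<in> S") (auto simp: B_def S_def intro: member_le_sum sum_nonneg)
  have "energy_summands b p f (x, y) \<le> (2 * B) powr p * b x y" for x y
    using p_gt_1 b_nonneg[of x y] abs_triangle_ineq4[of "f x" "f y"] bound[of x] bound[of y]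
    by (auto simp: energy_summands_def mult.commute intro!: mult_left_mono powr_mono2)
  then have "(\<lambda>y. energy_summands b p f (x, y)) summable_on UNIV" for x
    by (intro summable_on_comparison_test[OF summable_on_cmult_right[OF b_summable]]
        energy_summands_nonneg)
  then have rows: "energy_summands b p f summable_on S \<times> UNIV"
    by (intro summable_on_SigmaI[where g = "\<lambda>x. infsum (\<lambda>y. energy_summands b p f (x, y)) UNIV"])
      (auto simp: energy_summands_nonneg fin S_def)
  then have "energy_summands b p f summable_on UNIV \<times> S"
    by (subst summable_on_swap) (simp add: energy_summands_swap case_prod_unfold)
  with rows have "energy_summands b p f summable_on (S \<times> UNIV \<union> UNIV \<times> S)"
    by (rule summable_on_union)
  moreover have "energy_summands b p f z = 0" if "z \<notin> S \<times> UNIV \<union> UNIV \<times> S" for z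
    using that p_gt_1 by (cases z) (auto simp: energy_summands_def S_def)
  ultimately show ?thesis
    by (rule summable_on_cong_neutral[THEN iffD1, rotated -1]) auto
qed

lemma finite_energy_contraction:
  assumes T: "\<And>s t. \<bar>T s - T t\<bar> \<le> \<bar>s - t\<bar>" and f: "finite_energy f"
  shows "finite_energy (\<lambda>x. T (f x))" "E (\<lambda>x. T (f x)) \<le> E f"
proof -
  have le: "energy_summands b p (\<lambda>x. T (f x)) z \<le> energy_summands b p f z" for z
    using T[of "f (fst z)" "f (snd z)"] p_gt_1 b_nonneg[of "fst z" "snd z"]
    by (cases z) (auto simp: energy_summands_def intro!: mult_left_mono powr_mono2)
  show "finite_energy (\<lambda>x. T (f x))"
    using f le energy_summands_nonneg by (rule summable_on_comparison_test)
  then show "E (\<lambda>x. T (f x)) \<le> E f"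
    using f le by (rule infsum_mono)
qed

lemma row_summable:
  assumes "finite_energy f"
  shows "(\<lambda>y. b x y * \<bar>f x - f y\<bar> powr p) summable_on UNIV"
  using summable_on_SigmaD1[of "\<lambda>u v. energy_summands b p f (u, v)" UNIV "\<lambda>_. UNIV" x] assms
  by (simp add: energy_summands_def)

lemma row_powr_le_dominator:
  assumes "\<bar>t\<bar> \<le> 1" "0 \<le> e" "e \<le> p"
  shows "b x y * \<bar>f x - f y + t\<bar> powr e \<le> 2 powr p * (b x y * (1 + \<bar>f x - f y\<bar> powr p))"
  using mult_left_mono[OF abs_add_powr_le[OF assms, of "f x - f y"] b_nonneg[of x y]]
  by (simp add: algebra_simps)

lemma row_dominator_summable:
  assumes "finite_energy f"
  shows "(\<lambda>y. 2 powr p * (b x y * (1 + \<bar>f x - f y\<bar> powr p))) summable_on UNIV"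
  unfolding distrib_left mult_1_right
  by (intro summable_on_cmult_right summable_on_add b_summable row_summable assms)

lemma row_powr_summable:
  assumes f: "finite_energy f" and t: "\<bar>t\<bar> \<le> 1" and e: "0 \<le> e" "e \<le> p"
  shows "(\<lambda>y. b x y * \<bar>f x - f y + t\<bar> powr e) summable_on UNIV"
proof (rule summable_on_dominated[OF row_dominator_summable[OF f]])
  fix y
  show "\<bar>b x y * \<bar>f x - f y + t\<bar> powr e\<bar> \<le> 2 powr p * (b x y * (1 + \<bar>f x - f y\<bar> powr p))"
    using row_powr_le_dominator[OF t e] b_nonneg[of x y] by (simp add: abs_mult)
qed

lemma row_spow_summable:
  assumes "finite_energy f" "\<bar>t\<bar> \<le> 1"
  shows "(\<lambda>y. b x y * spow p (f x - f y + t)) summable_on UNIV"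
proof (rule summable_on_dominated)
  show "(\<lambda>y. b x y * \<bar>f x - f y + t\<bar> powr (p - 1)) summable_on UNIV"
    using assms p_gt_1 by (intro row_powr_summable) auto
qed (simp add: abs_mult abs_spow b_nonneg)

lemma energy_summands_raise:
  fixes f :: "'a \<Rightarrow> real" and x :: 'a and t :: real
  defines "\<phi> \<equiv> \<lambda>y. b x y * (\<bar>f x - f y + t\<bar> powr p - \<bar>f x - f y\<bar> powr p)"
  shows "energy_summands b p (f(x := f x + t)) (u, v) =
           energy_summands b p f (u, v) + ((if u = x then \<phi> v else 0) + (if v = x then \<phi> u else 0))"
proof -
  have "\<bar>f u - (f x + t)\<bar> = \<bar>f x - f u + t\<bar>" "\<bar>f u - f x\<bar> = \<bar>f x - f u\<bar>"
    by linarith+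
  then show ?thesis
    by (auto simp: energy_summands_def \<phi>_def b_diag b_sym[of u x] algebra_simps)
qed

lemma energy_raise:
  assumes f: "finite_energy f" and t: "\<bar>t\<bar> \<le> 1"
  shows "finite_energy (f(x := f x + t))"
    and "E (f(x := f x + t)) =
           E f + 2 * infsum (\<lambda>y. b x y * (\<bar>f x - f y + t\<bar> powr p - \<bar>f x - f y\<bar> powr p)) UNIV"
proof -
  define \<phi> where "\<phi> y = b x y * (\<bar>f x - f y + t\<bar> powr p - \<bar>f x - f y\<bar> powr p)" for y
  have "\<phi> summable_on UNIV"
    unfolding \<phi>_def right_diff_distrib
    using f t p_gt_1 by (intro summable_on_diff row_powr_summable row_summable) auto
  then have \<phi>: "(\<phi> has_sum infsum \<phi> UNIV) UNIV"
    by (rule has_sum_infsum)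
  have "((\<lambda>z. energy_summands b p f z + ((\<lambda>(u, v). if u = x then \<phi> v else 0) z +
                  (\<lambda>(u, v). if v = x then \<phi> u else 0) z))
        has_sum (E f + (infsum \<phi> UNIV + infsum \<phi> UNIV))) UNIV"
    using has_sum_infsum[OF f] has_sum_row_iff[THEN iffD2, OF \<phi>] has_sum_col_iff[THEN iffD2, OF \<phi>]
    by (intro has_sum_add)
  moreover have "energy_summands b p (f(x := f x + t)) =
      (\<lambda>z. energy_summands b p f z + ((\<lambda>(u, v). if u = x then \<phi> v else 0) z +
              (\<lambda>(u, v). if v = x then \<phi> u else 0) z))"
    by (auto simp: energy_summands_raise \<phi>_def)
  ultimately have "(energy_summands b p (f(x := f x + t)) has_sum (E f + 2 * infsum \<phi> UNIV)) UNIV"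
    by simp
  then show "finite_energy (f(x := f x + t))"
    and "E (f(x := f x + t)) = E f + 2 * infsum (\<lambda>y. b x y * (\<bar>f x - f y + t\<bar> powr p - \<bar>f x - f y\<bar> powr p)) UNIV"
    by (auto simp: has_sum_iff \<phi>_def[abs_def])
qed

lemma energy_raise_le:
  assumes f: "finite_energy f" and t: "\<bar>t\<bar> \<le> 1"
  shows "E (f(x := f x + t)) - E f \<le> 2 * p * t * infsum (\<lambda>y. b x y * spow p (f x - f y + t)) UNIV"
proof -
  have "infsum (\<lambda>y. b x y * (\<bar>f x - f y + t\<bar> powr p - \<bar>f x - f y\<bar> powr p)) UNIV
      \<le> infsum (\<lambda>y. p * t * (b x y * spow p (f x - f y + t))) UNIV"
  proof (rule infsum_mono)
    show "(\<lambda>y. b x y * (\<bar>f x - f y + t\<bar> powr p - \<bar>f x - f y\<bar> powr p)) summable_on UNIV"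
      unfolding right_diff_distrib
      using f t p_gt_1 by (intro summable_on_diff row_powr_summable row_summable) auto
    show "(\<lambda>y. p * t * (b x y * spow p (f x - f y + t))) summable_on UNIV"
      using f t by (intro summable_on_cmult_right row_spow_summable)
    fix y
    have tangent: "\<bar>f x - f y + t\<bar> powr p - \<bar>f x - f y\<bar> powr p \<le> p * t * spow p (f x - f y + t)"
      using abs_powr_ge_tangent[OF p_gt_1, of "f x - f y + t" "f x - f y"] by (simp add: algebra_simps)
    show "b x y * (\<bar>f x - f y + t\<bar> powr p - \<bar>f x - f y\<bar> powr p) \<le> p * t * (b x y * spow p (f x - f y + t))"
      using mult_left_mono[OF tangent b_nonneg[of x y]] by (simp add: algebra_simps)
  qed
  then show ?thesis
    using energy_raise(2)[OF f t, of x] f t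
    by (simp add: infsum_cmult_right' mult.assoc)
qed

lemma row_spow_tendsto:
  assumes f: "finite_energy f"
  shows "((\<lambda>t. infsum (\<lambda>y. b x y * spow p (f x - f y + t)) UNIV)
           \<longlongrightarrow> infsum (\<lambda>y. b x y * spow p (f x - f y)) UNIV) (at 0)"
proof (rule infsum_tendsto_dominated)
  show "(\<lambda>y. 2 powr p * (b x y * (1 + \<bar>f x - f y\<bar> powr p))) summable_on UNIV"
    by (rule row_dominator_summable[OF f])
  have "\<forall>\<^sub>F t in at (0::real). \<bar>t\<bar> \<le> 1"
    by (auto simp: eventually_at intro!: exI[of _ 1])
  then show "\<forall>\<^sub>F t in at 0. \<forall>y\<in>UNIV.
      \<bar>b x y * spow p (f x - f y + t)\<bar> \<le> 2 powr p * (b x y * (1 + \<bar>f x - f y\<bar> powr p))"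
  proof eventually_elim
    case (elim t)
    have "b x y * \<bar>f x - f y + t\<bar> powr (p - 1) \<le> 2 powr p * (b x y * (1 + \<bar>f x - f y\<bar> powr p))" for y
      using elim p_gt_1 by (intro row_powr_le_dominator) auto
    then show ?case
      by (simp add: abs_mult abs_spow b_nonneg)
  qed
  fix y
  have "((\<lambda>t. f x - f y + t) \<longlongrightarrow> f x - f y + 0) (at 0)"
    by (intro tendsto_intros)
  then show "((\<lambda>t. b x y * spow p (f x - f y + t)) \<longlongrightarrow> b x y * spow p (f x - f y)) (at 0)"
    by (auto intro!: tendsto_mult_left isCont_tendsto_compose[OF isCont_spow[OF p_gt_1]])
qed simp

lemma row_spow_sum_nonneg_if_raise_nondecreasing:
  assumes f: "finite_energy f"
    and raise: "\<And>t. 0 < t \<Longrightarrow> t \<le> 1 \<Longrightarrow> E f \<le> E (f(x := f x + t))"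
  shows "0 \<le> infsum (\<lambda>y. b x y * spow p (f x - f y)) UNIV"
proof (rule tendsto_lowerbound)
  show "((\<lambda>t. infsum (\<lambda>y. b x y * spow p (f x - f y + t)) UNIV)
           \<longlongrightarrow> infsum (\<lambda>y. b x y * spow p (f x - f y)) UNIV) (at_right 0)"
    using row_spow_tendsto[OF f] by (rule tendsto_mono[OF at_le, rotated]) simp
  have "\<forall>\<^sub>F t in at_right (0::real). 0 < t \<and> t \<le> 1"
    by (auto simp: eventually_at_right_field intro!: exI[of _ 1])
  then show "\<forall>\<^sub>F t in at_right 0. 0 \<le> infsum (\<lambda>y. b x y * spow p (f x - f y + t)) UNIV"
  proof eventually_elim
    case (elim t)
    then have "0 \<le> 2 * p * t * infsum (\<lambda>y. b x y * spow p (f x - f y + t)) UNIV"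
      using raise[of t] energy_raise_le[OF f, of t x] by auto
    moreover have "0 < 2 * p * t"
      using elim p_gt_1 by simp
    ultimately show ?case
      by (simp add: zero_le_mult_iff)
  qed
qed simp

definition cutoff :: "'a set \<Rightarrow> 'a set \<Rightarrow> real \<Rightarrow> ('a \<Rightarrow> real) \<Rightarrow> bool" where
  "cutoff S T \<epsilon> v \<longleftrightarrow> S \<subseteq> T \<and> finite T \<and> (\<forall>x. 0 \<le> v x \<and> v x \<le> 1) \<and> (\<forall>x\<in>S. v x = 0) \<and>
     (\<forall>x. x \<notin> T \<longrightarrow> v x = 1) \<and> finite_energy v \<and> E v \<le> \<epsilon>"

lemma parabolic_cutoff:
  assumes par: "p_parabolic b (\<lambda>_. 0) p" and S: "finite S" and \<epsilon>: "\<epsilon> > 0"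
  shows "\<exists>T v. cutoff S T \<epsilon> v"
proof -
  define A where "A = {energy b (\<lambda>_. 0) p \<phi> | \<phi>. finite {x. \<phi> x \<noteq> 0} \<and> (\<forall>x\<in>S. \<phi> x \<ge> 1)}"
  have "energy b (\<lambda>_. 0) p (indicator S) \<in> A"
    unfolding A_def using S by (auto intro!: exI[of _ "indicator S"] simp: indicator_def)
  moreover have "Inf A < \<epsilon> / 2"
    using par S \<epsilon> by (simp add: p_parabolic_def capacity_def A_def)
  ultimately obtain a where "a \<in> A" "a < \<epsilon> / 2"
    by (metis cInf_lessD empty_iff)
  then obtain \<phi> where \<phi>: "finite {x. \<phi> x \<noteq> 0}" "\<forall>x\<in>S. 1 \<le> \<phi> x" "E \<phi> < \<epsilon>"
    by (auto simp: A_def energy_def)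
  define T :: "real \<Rightarrow> real" where "T s = 1 - max 0 (min 1 s)" for s
  have "\<bar>T s - T t\<bar> \<le> \<bar>s - t\<bar>" for s t
    by (auto simp: T_def)
  note contraction = finite_energy_contraction[OF this finite_energy_if_finite_support[OF \<phi>(1)]]
  have "cutoff S (S \<union> {x. \<phi> x \<noteq> 0}) \<epsilon> (\<lambda>x. T (\<phi> x))"
    unfolding cutoff_def using S \<phi> contraction by (auto simp: T_def)
  then show ?thesis
    by blast
qed

lemma energy_summands_Max_le:
  assumes "finite N" "N \<noteq> {}"
  shows "energy_summands b p (\<lambda>x. Max ((\<lambda>n. w n x) ` N)) z \<le> (\<Sum>n\<in>N. energy_summands b p (w n) z)"
proof -
  obtain u v where z: "z = (u, v)"
    by (cases z)
  obtain n where n: "n \<in> N" "\<bar>Max ((\<lambda>n. w n u) ` N) - Max ((\<lambda>n. w n v) ` N)\<bar> \<le> \<bar>w n u - w n v\<bar>"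
    using abs_Max_diff_le[OF assms] by blast
  then have "energy_summands b p (\<lambda>x. Max ((\<lambda>n. w n x) ` N)) z \<le> energy_summands b p (w n) z"
    using p_gt_1 b_nonneg[of u v] by (auto simp: z energy_summands_def intro!: mult_left_mono powr_mono2)
  also have "\<dots> \<le> (\<Sum>n\<in>N. energy_summands b p (w n) z)"
    using assms(1) n(1) by (intro member_le_sum energy_summands_nonneg)
  finally show ?thesis .
qed

lemma finite_energy_SUP:
  assumes F: "incseq F" "\<And>x. \<exists>n. x \<in> F n"
    and w0: "\<And>n x. x \<in> F n \<Longrightarrow> w n x = 0"
    and w: "\<And>n. finite_energy (w n)" "\<And>N. finite N \<Longrightarrow> (\<Sum>n\<in>N. E (w n)) \<le> C"
  shows "finite_energy (\<lambda>x. SUP n. w n x)"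
proof (rule nonneg_bdd_above_summable_on)
  show "bdd_above (sum (energy_summands b p (\<lambda>x. SUP n. w n x)) ` {P. P \<subseteq> UNIV \<and> finite P})"
  proof (rule bdd_aboveI2)
    fix P :: "('a \<times> 'a) set"
    assume "P \<in> {P. P \<subseteq> UNIV \<and> finite P}"
    then have P: "finite P"
      by simp
    have "finite (fst ` P \<union> snd ` P)"
      using P by simp
    then obtain j where j: "fst ` P \<union> snd ` P \<subseteq> F j"
      using finite_subset_incseq F by blast
    have SUP_eq: "(SUP n. w n x) = Max ((\<lambda>n. w n x) ` {..j})" if "x \<in> F j" for x
      using F(1) w0 that by (rule SUP_eq_Max_if_vanishing)
    have "sum (energy_summands b p (\<lambda>x. SUP n. w n x)) P
        = sum (energy_summands b p (\<lambda>x. Max ((\<lambda>n. w n x) ` {..j}))) P"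
    proof (rule sum.cong)
      fix z
      assume "z \<in> P"
      then have "fst z \<in> F j" "snd z \<in> F j"
        using j by auto
      then show "energy_summands b p (\<lambda>x. SUP n. w n x) z
          = energy_summands b p (\<lambda>x. Max ((\<lambda>n. w n x) ` {..j})) z"
        using SUP_eq by (cases z) (auto intro!: energy_summands_cong)
    qed simp
    also have "\<dots> \<le> (\<Sum>z\<in>P. \<Sum>n\<le>j. energy_summands b p (w n) z)"
      by (intro sum_mono energy_summands_Max_le) auto
    also have "\<dots> = (\<Sum>n\<le>j. sum (energy_summands b p (w n)) P)"
      by (rule sum.swap)
    also have "\<dots> \<le> (\<Sum>n\<le>j. E (w n))"
    proof (rule sum_mono)
      fix n
      show "sum (energy_summands b p (w n)) P \<le> E (w n)"
        using P w(1)[of n] by (intro finite_sum_le_infsum energy_summands_nonneg) simp_all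
    qed
    also have "\<dots> \<le> C"
      by (rule w(2)) simp
    finally show "sum (energy_summands b p (\<lambda>x. SUP n. w n x)) P \<le> C" .
  qed
qed (rule energy_summands_nonneg)

lemma exhausting_cutoffs:
  assumes par: "p_parabolic b (\<lambda>_. 0) p" and cnt: "countable (UNIV :: 'a set)"
    and K: "finite K" and \<epsilon>: "\<And>n. \<epsilon> n > 0"
  obtains F v where "F 0 = K" "\<And>x. \<exists>n. x \<in> F n" "\<And>n. cutoff (F n) (F (Suc n)) (\<epsilon> n) (v n)"
proof -
  have "\<forall>S n. \<exists>Tv. finite S \<longrightarrow> cutoff S (fst Tv) (\<epsilon> n) (snd Tv)"
    using parabolic_cutoff[OF par _ \<epsilon>] by simp
  then obtain Tv where Tv: "\<And>S n. finite S \<Longrightarrow> cutoff S (fst (Tv S n)) (\<epsilon> n) (snd (Tv S n))"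
    by metis
  define e where "e = from_nat_into (UNIV :: 'a set)"
  define F where "F = rec_nat K (\<lambda>n A. fst (Tv (A \<union> {e n}) n))"
  define v where "v n = snd (Tv (F n \<union> {e n}) n)" for n
  have F_Suc: "F (Suc n) = fst (Tv (F n \<union> {e n}) n)" for n
    by (simp add: F_def)
  have "finite (F n)" for n
    by (induction n) (use K Tv in \<open>auto simp: F_def cutoff_def\<close>)
  then have cut: "cutoff (F n \<union> {e n}) (F (Suc n)) (\<epsilon> n) (v n)" for n
    using Tv by (simp add: v_def F_Suc)
  have "F 0 = K"
    by (simp add: F_def)
  moreover have "\<exists>n. x \<in> F n" for x
  proof -
    obtain n where "e n = x"
      using from_nat_into_surj[OF cnt] unfolding e_def by blast
    then show ?thesis
      using cut[of n] by (auto simp: cutoff_def)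
  qed
  moreover have "cutoff (F n) (F (Suc n)) (\<epsilon> n) (v n)" for n
    using cut[of n] by (auto simp: cutoff_def)
  ultimately show ?thesis
    by (rule that)
qed

lemma exists_proper_finite_energy:
  assumes par: "p_parabolic b (\<lambda>_. 0) p" and cnt: "countable (UNIV :: 'a set)" and K: "finite K"
  shows "\<exists>\<psi>. (\<forall>x. 0 \<le> \<psi> x) \<and> (\<forall>x\<in>K. \<psi> x = 0) \<and> finite_energy \<psi> \<and>
             (\<forall>M. \<exists>F. finite F \<and> (\<forall>x. x \<notin> F \<longrightarrow> M < \<psi> x))"
proof -
  define \<epsilon> where "\<epsilon> n = (1/2) ^ n / real (Suc n) powr p" for n
  obtain F v where F: "F 0 = K" "\<And>x. \<exists>n. x \<in> F n"
    and cut: "\<And>n. cutoff (F n) (F (Suc n)) (\<epsilon> n) (v n)"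
    using exhausting_cutoffs[OF par cnt K, of \<epsilon>] by (auto simp: \<epsilon>_def)
  have "incseq F"
    using cut by (intro incseq_SucI) (simp add: cutoff_def)
  have v: "\<And>n x. 0 \<le> v n x" "\<And>n x. x \<in> F n \<Longrightarrow> v n x = 0"
    "\<And>n x. x \<notin> F (Suc n) \<Longrightarrow> v n x = 1" "\<And>n. finite_energy (v n)" "\<And>n. E (v n) \<le> \<epsilon> n"
    using cut by (simp_all add: cutoff_def)
  define w where "w n x = real (Suc n) * v n x" for n x
  have w0: "x \<in> F n \<Longrightarrow> w n x = 0" for n x
    by (simp add: w_def v(2))
  have SUP_eq: "(SUP n. w n x) = Max ((\<lambda>n. w n x) ` {..j})" if "x \<in> F j" for x j
    using \<open>incseq F\<close> w0 that by (rule SUP_eq_Max_if_vanishing)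
  have w_le_SUP: "w n x \<le> (SUP n. w n x)" for n x
  proof -
    obtain j where "x \<in> F j"
      using F(2) by blast
    then have "x \<in> F (max j n)"
      using incseqD[OF \<open>incseq F\<close>, of j "max j n"] by auto
    have "w n x \<le> Max ((\<lambda>n. w n x) ` {..max j n})"
      by (intro Max_ge) auto
    also have "\<dots> = (SUP n. w n x)"
      using SUP_eq[OF \<open>x \<in> F (max j n)\<close>] by simp
    finally show ?thesis .
  qed
  have energy_w: "finite_energy (w n)" "E (w n) \<le> (1/2) ^ n" for n
  proof -
    have w: "energy_summands b p (w n) = (\<lambda>z. real (Suc n) powr p * energy_summands b p (v n) z)"
      unfolding w_def energy_summands_scale by simp
    show "finite_energy (w n)"
      unfolding w by (intro summable_on_cmult_right v(4))
    have "E (w n) \<le> real (Suc n) powr p * \<epsilon> n"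
      unfolding w infsum_cmult_right' by (intro mult_left_mono v(5)) auto
    then show "E (w n) \<le> (1/2) ^ n"
      by (simp add: \<epsilon>_def)
  qed
  have energy_sum: "(\<Sum>n\<in>N. E (w n)) \<le> 2" if "finite N" for N
  proof -
    have "(\<Sum>n\<in>N. E (w n)) \<le> (\<Sum>n\<in>N. (1/2::real) ^ n)"
      by (intro sum_mono energy_w)
    also have "\<dots> \<le> (\<Sum>n. (1/2::real) ^ n)"
      using that by (intro sum_le_suminf summable_geometric) auto
    also have "\<dots> = 2"
      using suminf_geometric[of "1/2::real"] by simp
    finally show ?thesis .
  qed
  have "finite_energy (\<lambda>x. SUP n. w n x)"
    using \<open>incseq F\<close> F(2) w0 energy_w(1) energy_sum by (rule finite_energy_SUP)
  moreover have "0 \<le> (SUP n. w n x)" for x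
    using w_le_SUP[of 0 x] v(1)[of 0 x] by (simp add: w_def)
  moreover have "(SUP n. w n x) = 0" if "x \<in> K" for x
    using SUP_eq[of x 0] that F(1) w0 by simp
  moreover have "\<exists>G. finite G \<and> (\<forall>x. x \<notin> G \<longrightarrow> M < (SUP n. w n x))" for M
  proof -
    obtain n where n: "M < real (Suc n)"
      using reals_Archimedean2 less_trans of_nat_less_iff lessI by metis
    have "M < (SUP n. w n x)" if "x \<notin> F (Suc n)" for x
      using n w_le_SUP[of n x] v(3)[OF that] by (simp add: w_def)
    moreover have "finite (F (Suc n))"
      using cut[of n] by (simp add: cutoff_def)
    ultimately show ?thesis
      by blast
  qed
  ultimately show ?thesis
    by (intro exI[of _ "\<lambda>x. SUP n. w n x"]) blast
qed

lemma abs_diff_le_energy: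
  assumes f: "finite_energy f" and uv: "b u v > 0"
  shows "\<bar>f u - f v\<bar> \<le> (E f / b u v) powr (1 / p)"
proof -
  have "b u v * \<bar>f u - f v\<bar> powr p \<le> E f"
    using finite_sum_le_infsum[OF f, of "{(u, v)}"] energy_summands_nonneg
    by (simp add: energy_summands_def)
  then have "\<bar>f u - f v\<bar> powr p \<le> E f / b u v"
    using uv by (simp add: pos_le_divide_eq mult.commute)
  then have "(\<bar>f u - f v\<bar> powr p) powr (1 / p) \<le> (E f / b u v) powr (1 / p)"
    using p_gt_1 by (intro powr_mono2) auto
  then show ?thesis
    using p_gt_1 by (simp add: powr_powr)
qed

lemma bounded_if_energy_bounded:
  assumes conn: "\<And>x y. (x, y) \<in> {(u, v). 0 < b u v}\<^sup>*"
    and f: "\<And>n. f n k = 0" "\<And>n. finite_energy (f n)" "\<And>n. E (f n) \<le> B"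
  shows "bounded (range (\<lambda>n. f n x))"
proof -
  have "\<exists>C. \<forall>n. \<bar>f n x\<bar> \<le> C"
    using conn[of k x]
  proof (induction rule: rtrancl_induct)
    case base
    then show ?case
      using f(1) by auto
  next
    case (step u v)
    then obtain C where C: "\<And>n. \<bar>f n u\<bar> \<le> C" and uv: "b u v > 0"
      by auto
    have diff: "\<bar>f n u - f n v\<bar> \<le> (B / b u v) powr (1 / p)" for n
    proof -
      have "0 \<le> E (f n) / b u v"
        using uv by (simp add: infsum_nonneg energy_summands_nonneg)
      moreover have "E (f n) / b u v \<le> B / b u v"
        using f(3)[of n] uv by (simp add: divide_right_mono)
      ultimately have "(E (f n) / b u v) powr (1 / p) \<le> (B / b u v) powr (1 / p)"
        using p_gt_1 by (intro powr_mono2) auto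
      then show ?thesis
        using abs_diff_le_energy[OF f(2) uv, of n] by linarith
    qed
    have "\<bar>f n v\<bar> \<le> C + (B / b u v) powr (1 / p)" for n
      using C[of n] diff[of n] by linarith
    then show ?case
      by blast
  qed
  then show ?thesis
    by (auto simp: bounded_iff)
qed

lemma energy_le_pointwise_limit:
  assumes lim: "\<And>x. (\<lambda>i. f i x) \<longlonglongrightarrow> g x" and f: "\<And>i. finite_energy (f i)"
    and B: "\<And>i. E (f i) \<le> B i" "B \<longlonglongrightarrow> L"
  shows "finite_energy g" "E g \<le> L"
proof -
  have partial: "sum (energy_summands b p g) P \<le> L" if P: "finite P" for P
  proof (rule LIMSEQ_le[OF _ B(2)])
    show "(\<lambda>i. sum (energy_summands b p (f i)) P) \<longlonglongrightarrow> sum (energy_summands b p g) P"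
      unfolding energy_summands_def case_prod_unfold
      using p_gt_1 by (intro tendsto_intros lim) auto
    have "sum (energy_summands b p (f i)) P \<le> B i" for i
      using finite_sum_le_infsum[OF f P] B(1)[of i] energy_summands_nonneg by (meson order.trans subset_UNIV)
    then show "\<exists>N. \<forall>i\<ge>N. sum (energy_summands b p (f i)) P \<le> B i"
      by blast
  qed
  show g: "finite_energy g"
    using partial by (intro nonneg_bdd_above_summable_on energy_summands_nonneg bdd_aboveI2) auto
  show "E g \<le> L"
    using g partial by (rule infsum_le_finite_sums)
qed

definition admissible :: "'a set \<Rightarrow> ('a \<Rightarrow> real) \<Rightarrow> ('a \<Rightarrow> real) set" where
  "admissible K \<psi> = {f. (\<forall>x\<in>K. f x = 0) \<and> (\<forall>x. \<psi> x \<le> f x) \<and> finite_energy f}"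

lemma obstacle_minimizer_exists:
  assumes conn: "\<And>x y. (x, y) \<in> {(u, v). 0 < b u v}\<^sup>*" and cnt: "countable (UNIV :: 'a set)"
    and k: "k \<in> K" and \<psi>: "\<psi> \<in> admissible K \<psi>"
  shows "\<exists>\<kappa>\<in>admissible K \<psi>. \<forall>g\<in>admissible K \<psi>. E \<kappa> \<le> E g"
proof -
  define I where "I = (INF f\<in>admissible K \<psi>. E f)"
  have bdd: "bdd_below (E ` admissible K \<psi>)"
    by (auto intro!: bdd_belowI[of _ 0] infsum_nonneg energy_summands_nonneg)
  have "\<exists>f. f \<in> admissible K \<psi> \<and> E f < I + 1 / real (Suc n)" for n
    using cInf_lessD[of "E ` admissible K \<psi>" "I + 1 / real (Suc n)"] \<psi> by (auto simp: I_def)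
  then obtain f where f: "\<And>n. f n \<in> admissible K \<psi>" "\<And>n. E (f n) < I + 1 / real (Suc n)"
    by metis
  have f_le: "E (f n) \<le> I + 1" for n
  proof -
    have "1 / real (Suc n) \<le> 1"
      by simp
    then show ?thesis
      using f(2)[of n] by linarith
  qed
  have "bounded (range (\<lambda>n. f n x))" for x
    using f(1) k f_le by (intro bounded_if_energy_bounded[OF conn]) (auto simp: admissible_def)
  then obtain r where r: "strict_mono r" "\<And>x. convergent (\<lambda>i. f (r i) x)"
    using convergent_subseq_pointwise[OF cnt] by blast
  define \<kappa> where "\<kappa> x = lim (\<lambda>i. f (r i) x)" for x
  have lim: "(\<lambda>i. f (r i) x) \<longlonglongrightarrow> \<kappa> x" for x
    using r(2) by (simp add: \<kappa>_def convergent_LIMSEQ_iff)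
  have "(\<lambda>i. I + 1 / real (Suc (r i))) \<longlonglongrightarrow> I + 0"
    using LIMSEQ_subseq_LIMSEQ[OF LIMSEQ_inverse_real_of_nat r(1)]
    by (intro tendsto_add) (auto simp: o_def inverse_eq_divide)
  then have "finite_energy \<kappa>" "E \<kappa> \<le> I"
    using energy_le_pointwise_limit[OF lim, where B = "\<lambda>i. I + 1 / real (Suc (r i))"] f(1,2)
    by (auto simp: admissible_def less_imp_le)
  moreover have "\<kappa> x = 0" if "x \<in> K" for x
  proof -
    have "(\<lambda>i. f (r i) x) = (\<lambda>i. 0)"
      using f(1) that by (auto simp: admissible_def)
    then show ?thesis
      using lim[of x] LIMSEQ_unique[OF _ tendsto_const] by metis
  qed
  moreover have "\<psi> x \<le> \<kappa> x" for x
    using f(1) by (intro LIMSEQ_le_const[OF lim]) (auto simp: admissible_def)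
  moreover have "I \<le> E g" if "g \<in> admissible K \<psi>" for g
    unfolding I_def using bdd that by (rule cINF_lower)
  ultimately have "\<kappa> \<in> admissible K \<psi>" "\<forall>g\<in>admissible K \<psi>. E \<kappa> \<le> E g"
    by (auto simp: admissible_def intro: order.trans)
  then show ?thesis
    by blast
qed

lemma obstacle_minimizer_superharmonic:
  assumes \<kappa>: "\<kappa> \<in> admissible K \<psi>" "\<forall>g\<in>admissible K \<psi>. E \<kappa> \<le> E g" and m: "\<And>x. m x > 0"
  shows "p_superharmonic_on b m p (UNIV - K) \<kappa>"
  unfolding p_superharmonic_on_def in_Fp_def p_laplacian_def
proof (intro conjI ballI)
  fix x
  assume "x \<in> UNIV - K"
  have fe: "finite_energy \<kappa>"
    using \<kappa>(1) by (simp add: admissible_def)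
  show "(\<lambda>y. b x y * \<bar>\<kappa> x - \<kappa> y\<bar> powr (p - 1)) summable_on UNIV"
    using row_powr_summable[OF fe, of 0 "p - 1" x] p_gt_1 by simp
  have "E \<kappa> \<le> E (\<kappa>(x := \<kappa> x + t))" if "0 < t" "t \<le> 1" for t
  proof -
    have "\<psi> x \<le> \<kappa> x + t"
      using \<kappa>(1) that by (force simp: admissible_def intro: add_increasing2)
    then have "\<kappa>(x := \<kappa> x + t) \<in> admissible K \<psi>"
      using \<kappa>(1) \<open>x \<in> UNIV - K\<close> that energy_raise(1)[OF fe, of t x]
      by (auto simp: admissible_def)
    then show ?thesis
      using \<kappa>(2) by blast
  qed
  then have "0 \<le> infsum (\<lambda>y. b x y * spow p (\<kappa> x - \<kappa> y)) UNIV"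
    by (rule row_spow_sum_nonneg_if_raise_nondecreasing[OF fe])
  then show "0 \<le> 1 / m x * infsum (\<lambda>y. b x y * spow p (\<kappa> x - \<kappa> y)) UNIV"
    using m[of x] by simp
qed

end

theorem theorem3p27:
  fixes b :: "'a \<Rightarrow> 'a \<Rightarrow> real" and m c :: "'a \<Rightarrow> real" and p :: real and K :: "'a set"
  assumes "weighted_graph b m c"
    and "\<forall>x. c x = 0"
    and "p > 1"
    and "p_parabolic b c p"
    and "finite K" and "K \<noteq> {}"
  shows "\<exists>\<kappa> :: 'a \<Rightarrow> real. (\<forall>x. \<kappa> x \<ge> 0) \<and>
           in_Dp b c p \<kappa> \<and>
           p_superharmonic_on b m p (UNIV - K) \<kappa> \<and> (\<forall>x\<in>K. \<kappa> x = 0) \<and>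
           (\<forall>M>0. \<exists>F. finite F \<and> (\<forall>x\<in>UNIV - F. \<kappa> x > M))"
proof -
  note G = assms(1)[unfolded weighted_graph_def]
  have c: "c = (\<lambda>_. 0)"
    using assms(2) by auto
  interpret edge_weights b p
    using G assms(3) by unfold_locales auto
  have cnt: "countable (UNIV :: 'a set)" and conn: "\<And>x y. (x, y) \<in> {(u, v). 0 < b u v}\<^sup>*"
    using G by auto
  obtain \<psi> where \<psi>: "\<forall>x. 0 \<le> \<psi> x" "\<forall>x\<in>K. \<psi> x = 0" "finite_energy \<psi>"
    "\<forall>M. \<exists>F. finite F \<and> (\<forall>x. x \<notin> F \<longrightarrow> M < \<psi> x)"
    using exists_proper_finite_energy[OF _ cnt assms(5)] assms(4) c by blast
  have "\<psi> \<in> admissible K \<psi>"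
    using \<psi> by (simp add: admissible_def)
  then obtain \<kappa> where \<kappa>: "\<kappa> \<in> admissible K \<psi>" "\<forall>g\<in>admissible K \<psi>. E \<kappa> \<le> E g"
    using obstacle_minimizer_exists[OF conn cnt] assms(6) by blast
  have "p_superharmonic_on b m p (UNIV - K) \<kappa>"
    using \<kappa> G by (intro obstacle_minimizer_superharmonic) auto
  moreover have \<psi>_le: "\<psi> x \<le> \<kappa> x" for x
    using \<kappa>(1) by (simp add: admissible_def)
  moreover have "in_Dp b c p \<kappa>" "\<forall>x\<in>K. \<kappa> x = 0"
    using \<kappa>(1) by (simp_all add: admissible_def in_Dp_def c)
  ultimately show ?thesis
    using \<psi>(1,4) by (intro exI[of _ \<kappa>]) (meson DiffD2 order.trans less_le_trans)
qed

end
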